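(* Let $1\le n<L$ and suppose $p_k,q_k>0$ for all $k$. Let $\pi$ be the stationary distribution of the ASEP on $\Psi_{L,n}$ and $\hat\pi$ the (unique) stationary distribution of the chain on $\Omega_{L,n}$. Then for every $\psi\in\Psi_{L,n}$, $$\pi(\psi)=\sum_{\omega\in\Pi^{-1}(\psi)}\hat\pi(\omega).$$
   Context: Particle labels $k$ are taken modulo $n$, positions modulo $L$. $\Omega_{L,n}$ is the set of words $w_1\cdots w_L$ on the ring $\mathbb{Z}/L\mathbb{Z}$ over the alphabet $\{\bullet_1,\dots,\bullet_n,\Box_1,\dots,\Box_n\}$ in which each $\bullet_k$ occurs exactly once, the letters $\bullet_1,\dots,\bullet_n$ appear in this cyclic order, and the remaining $L-n$ letters are arbitrary $\Box_i$'s. The chain on $\Omega_{L,n}$ has transitions (displayed segments are consecutive positions, rest unchanged, $C$ a possibly empty word in the $\Box$-letters): (T1) $\bullet_k\Box_i \to \Box_i\bullet_k$ at rate $p_k$, if $i\neq k$; (T2) $\bullet_{k-1}\,C\,\bullet_k\Box_k \to \bullet_{k-1}\Box_{k-1}\,C\,\bullet_k$ at rate $p_k$; (T3) $\Box_i\bullet_k \to \bullet_k\Box_i$ at rate $q_k$, if $i\neq k$; (T4) $\Box_k\bullet_k\,C\,\bullet_{k+1} \to \bullet_k\,C\,\Box_{k+1}\bullet_{k+1}$ at rate $q_k$. $\Psi_{L,n}$ is the set of words on the ring $\mathbb{Z}/L\mathbb{Z}$ containing each of $\bullet_1,\dots,\bullet_n$ exactly once in this cyclic order and $L-n$ vacancies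 $\Box$; the ASEP on $\Psi_{L,n}$ has only the transitions $\bullet_k\Box\to\Box\bullet_k$ at rate $p_k$ and $\Box\bullet_k\to\bullet_k\Box$ at rate $q_k$. The map $\Pi:\Omega_{L,n}\to\Psi_{L,n}$ replaces every $\Box_i$ by $\Box$. *)

theory Defs
  imports Complex_Main
begin

text \<open>Words on the ring Z/LZ are lists of length L; position i < L, indices mod L.
  Particle labels are 0..n-1 (paper: 1..n), taken mod n.\<close>

datatype oletter = Pt nat | Bx nat
datatype pletter = PPt nat | Vac

definition nxt :: "nat \<Rightarrow> nat \<Rightarrow> nat" where "nxt L x = Suc x mod L"
definition prv :: "nat \<Rightarrow> nat \<Rightarrow> nat" where "prv L x = (x + L - 1) mod L"

fun olab :: "oletter \<Rightarrow> nat option" where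
  "olab (Pt k) = Some k" | "olab (Bx m) = None"
fun plab :: "pletter \<Rightarrow> nat option" where
  "plab (PPt k) = Some k" | "plab Vac = None"

definition next_dist :: "nat \<Rightarrow> nat option list \<Rightarrow> nat \<Rightarrow> nat" where
  "next_dist L u i = (LEAST d. 0 < d \<and> u ! ((i + d) mod L) \<noteq> None)"
definition prev_dist :: "nat \<Rightarrow> nat option list \<Rightarrow> nat \<Rightarrow> nat" where
  "prev_dist L u i = (LEAST d. 0 < d \<and> u ! ((i + L - d) mod L) \<noteq> None)"

definition wf_lab :: "nat \<Rightarrow> nat \<Rightarrow> nat option list \<Rightarrow> bool" where
  "wf_lab L n u \<longleftrightarrow> length u = L
     \<and> (\<forall>i<L. \<forall>k. u ! i = Some k \<longrightarrow> k < n)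
     \<and> (\<forall>k<n. \<exists>!i. i < L \<and> u ! i = Some k)
     \<and> (\<forall>i<L. \<forall>k. u ! i = Some k \<longrightarrow>
          u ! ((i + next_dist L u i) mod L) = Some (Suc k mod n))"

definition Omega :: "nat \<Rightarrow> nat \<Rightarrow> oletter list set" where
  "Omega L n = {w. wf_lab L n (map olab w) \<and> (\<forall>i<length w. \<forall>m. w ! i = Bx m \<longrightarrow> m < n)}"

definition Psi :: "nat \<Rightarrow> nat \<Rightarrow> pletter list set" where
  "Psi L n = {w. wf_lab L n (map plab w)}"

fun proj_letter :: "oletter \<Rightarrow> pletter" where
  "proj_letter (Pt k) = PPt k" | "proj_letter (Bx m) = Vac"

definition Proj :: "oletter list \<Rightarrow> pletter list" where
  "Proj w = map proj_letter w"

definition T1 :: "nat \<Rightarrow> (nat \<Rightarrow> real) \<Rightarrow> oletter list \<Rightarrow> nat \<Rightarrow> (oletter list \<times> real) option" where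
  "T1 L p w i = (case (w ! i, w ! nxt L i) of
      (Pt k, Bx m) \<Rightarrow> if m \<noteq> k then Some (w[i := Bx m, nxt L i := Pt k], p k) else None
    | _ \<Rightarrow> None)"

definition T3 :: "nat \<Rightarrow> (nat \<Rightarrow> real) \<Rightarrow> oletter list \<Rightarrow> nat \<Rightarrow> (oletter list \<times> real) option" where
  "T3 L q w i = (case (w ! prv L i, w ! i) of
      (Bx m, Pt k) \<Rightarrow> if m \<noteq> k then Some (w[prv L i := Pt k, i := Bx m], q k) else None
    | _ \<Rightarrow> None)"

text \<open>T2: bullet_(k-1) C bullet_k Box_k -> bullet_(k-1) Box_(k-1) C bullet_k, where a is the
  position of bullet_(k-1) (d steps behind bullet_k at j); t is the offset of x after a, in 1..L.\<close>
definition T2 :: "nat \<Rightarrow> nat \<Rightarrow> (nat \<Rightarrow> real) \<Rightarrow> oletter list \<Rightarrow> nat \<Rightarrow> (oletter list \<times> real) option" where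
  "T2 L n p w j = (case (w ! j, w ! nxt L j) of
      (Pt k, Bx m) \<Rightarrow> if m = k then
         (let d = prev_dist L (map olab w) j; a = (j + L - d) mod L in
          Some (map (\<lambda>x. if x = nxt L j then Pt k
                         else let t = (x + L - Suc a) mod L + 1 in
                           if t = 1 then Bx ((k + n - 1) mod n)
                           else if 2 \<le> t \<and> t \<le> d then w ! prv L x
                           else w ! x) [0..<L], p k))
       else None
    | _ \<Rightarrow> None)"

text \<open>T4: Box_k bullet_k C bullet_(k+1) -> bullet_k C Box_(k+1) bullet_(k+1), where b is the
  position of bullet_(k+1) (e steps after bullet_k at j); s is the distance from x to b, in 1..L.\<close>
definition T4 :: "nat \<Rightarrow> nat \<Rightarrow> (nat \<Rightarrow> real) \<Rightarrow> oletter list \<Rightarrow> nat \<Rightarrow> (oletter list \<times> real) option" where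
  "T4 L n q w j = (case (w ! prv L j, w ! j) of
      (Bx m, Pt k) \<Rightarrow> if m = k then
         (let e = next_dist L (map olab w) j; b = (j + e) mod L in
          Some (map (\<lambda>x. if x = prv L j then Pt k
                         else let s = (b + L - Suc x) mod L + 1 in
                           if s = 1 then Bx (Suc k mod n)
                           else if 2 \<le> s \<and> s \<le> e then w ! nxt L x
                           else w ! x) [0..<L], q k))
       else None
    | _ \<Rightarrow> None)"

definition omove :: "nat \<Rightarrow> nat \<Rightarrow> (nat \<Rightarrow> real) \<Rightarrow> (nat \<Rightarrow> real) \<Rightarrow> oletter list \<Rightarrow> nat
    \<Rightarrow> (oletter list \<times> real) option" where
  "omove L n p q w i = (let ty = i div L; pos = i mod L in
     if ty = 0 then T1 L p w pos else if ty = 1 then T2 L n p w pos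
     else if ty = 2 then T3 L q w pos else T4 L n q w pos)"

definition pmove :: "nat \<Rightarrow> (nat \<Rightarrow> real) \<Rightarrow> (nat \<Rightarrow> real) \<Rightarrow> pletter list \<Rightarrow> nat
    \<Rightarrow> (pletter list \<times> real) option" where
  "pmove L p q w i = (let pos = i mod L in
     if i div L = 0 then
       (case (w ! pos, w ! nxt L pos) of
          (PPt k, Vac) \<Rightarrow> Some (w[pos := Vac, nxt L pos := PPt k], p k) | _ \<Rightarrow> None)
     else
       (case (w ! prv L pos, w ! pos) of
          (Vac, PPt k) \<Rightarrow> Some (w[prv L pos := PPt k, pos := Vac], q k) | _ \<Rightarrow> None))"

definition trate :: "('s \<Rightarrow> nat \<Rightarrow> ('s \<times> real) option) \<Rightarrow> nat \<Rightarrow> 's \<Rightarrow> 's \<Rightarrow> real" where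
  "trate mv N s s' = (\<Sum>i<N. case mv s i of None \<Rightarrow> 0 | Some (t, r) \<Rightarrow> if t = s' then r else 0)"

definition stationary :: "'s set \<Rightarrow> ('s \<Rightarrow> 's \<Rightarrow> real) \<Rightarrow> ('s \<Rightarrow> real) \<Rightarrow> bool" where
  "stationary S Q \<pi> \<longleftrightarrow> (\<forall>s\<in>S. 0 \<le> \<pi> s) \<and> (\<Sum>s\<in>S. \<pi> s) = 1
     \<and> (\<forall>s\<in>S. (\<Sum>s'\<in>S - {s}. \<pi> s * Q s s') = (\<Sum>s'\<in>S - {s}. \<pi> s' * Q s' s))"

definition QOmega :: "nat \<Rightarrow> nat \<Rightarrow> (nat \<Rightarrow> real) \<Rightarrow> (nat \<Rightarrow> real) \<Rightarrow> oletter list \<Rightarrow> oletter list \<Rightarrow> real" where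
  "QOmega L n p q = trate (omove L n p q) (4 * L)"

definition QPsi :: "nat \<Rightarrow> (nat \<Rightarrow> real) \<Rightarrow> (nat \<Rightarrow> real) \<Rightarrow> pletter list \<Rightarrow> pletter list \<Rightarrow> real" where
  "QPsi L p q = trate (pmove L p q) (2 * L)"

end

theory Submission
  imports Defs
begin

definition balanced :: "'s set \<Rightarrow> ('s \<Rightarrow> 's \<Rightarrow> real) \<Rightarrow> ('s \<Rightarrow> real) \<Rightarrow> bool" where
  "balanced S Q \<nu> \<longleftrightarrow> (\<forall>s\<in>S. (\<Sum>s'\<in>S - {s}. \<nu> s * Q s s') = (\<Sum>s'\<in>S - {s}. \<nu> s' * Q s' s))"

lemma stationary_iff_balanced:
  "stationary S Q \<pi> \<longleftrightarrow> (\<forall>s\<in>S. 0 \<le> \<pi> s) \<and> sum \<pi> S = 1 \<and> balanced S Q \<pi>"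
  unfolding stationary_def balanced_def ..

lemma balanced_iff_full_sums:
  assumes "finite S"
  shows "balanced S Q \<nu> \<longleftrightarrow> (\<forall>s\<in>S. (\<Sum>s'\<in>S. \<nu> s * Q s s') = (\<Sum>s'\<in>S. \<nu> s' * Q s' s))"
  unfolding balanced_def using assms by (simp add: sum.remove)

lemma balanced_diff:
  assumes "balanced S Q \<nu>" and "balanced S Q \<mu>"
  shows "balanced S Q (\<lambda>s. \<nu> s - \<mu> s)"
  using assms unfolding balanced_def by (simp add: left_diff_distrib sum_subtractf)

lemma balanced_uminus:
  assumes "balanced S Q \<nu>"
  shows "balanced S Q (\<lambda>s. - \<nu> s)"
  using assms unfolding balanced_def by (simp add: sum_negf)

text \<open>The positive part of a balanced signed measure is again balanced: at every state its
  outflow is at most its inflow, and both total to the same amount.\<close>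
lemma balanced_positive_part:
  assumes fin: "finite S" and Q_nonneg: "\<forall>s\<in>S. \<forall>s'\<in>S. 0 \<le> Q s s'"
    and bal: "balanced S Q \<nu>"
  shows "balanced S Q (\<lambda>s. max (\<nu> s) 0)"
proof -
  define \<rho> where "\<rho> s = max (\<nu> s) 0" for s
  define outflow where "outflow s = (\<Sum>s'\<in>S - {s}. \<rho> s * Q s s')" for s
  define inflow where "inflow s = (\<Sum>s'\<in>S - {s}. \<rho> s' * Q s' s)" for s
  have out_le_in: "outflow s \<le> inflow s" if s: "s \<in> S" for s
  proof (cases "0 \<le> \<nu> s")
    case True
    then have "outflow s = (\<Sum>s'\<in>S - {s}. \<nu> s * Q s s')"
      unfolding outflow_def \<rho>_def by simp
    also have "\<dots> = (\<Sum>s'\<in>S - {s}. \<nu> s' * Q s' s)"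
      using bal s unfolding balanced_def by blast
    also have "\<dots> \<le> inflow s"
      unfolding inflow_def \<rho>_def using Q_nonneg s by (intro sum_mono mult_right_mono) auto
    finally show ?thesis .
  next
    case False
    then show ?thesis
      unfolding outflow_def inflow_def \<rho>_def using Q_nonneg s by (auto intro: sum_nonneg)
  qed
  have minus_eq: "S - {s} = {s'\<in>S. s \<noteq> s'}" "S - {s} = {s'\<in>S. s' \<noteq> s}" for s
    by auto
  have "(\<Sum>s\<in>S. outflow s) = (\<Sum>s\<in>S. \<Sum>s'\<in>{s'\<in>S. s \<noteq> s'}. \<rho> s * Q s s')"
    unfolding outflow_def minus_eq(1) ..
  also have "\<dots> = (\<Sum>s'\<in>S. \<Sum>s\<in>{s\<in>S. s \<noteq> s'}. \<rho> s * Q s s')"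
    by (rule sum.swap_restrict[OF fin fin])
  also have "\<dots> = (\<Sum>s\<in>S. inflow s)"
    unfolding inflow_def minus_eq(2) ..
  finally have "(\<Sum>s\<in>S. outflow s) = (\<Sum>s\<in>S. inflow s)" .
  then have "(\<Sum>s\<in>S. inflow s - outflow s) = 0"
    by (simp add: sum_subtractf)
  then have "\<forall>s\<in>S. inflow s - outflow s = 0"
    using out_le_in by (subst sum_nonneg_eq_0_iff[OF fin, symmetric]) auto
  then show ?thesis
    unfolding balanced_def outflow_def inflow_def \<rho>_def by simp
qed

lemma balanced_nonneg_positive_step:
  assumes fin: "finite S" and Q_nonneg: "\<forall>s\<in>S. \<forall>s'\<in>S. 0 \<le> Q s s'"
    and bal: "balanced S Q \<rho>" and \<rho>_nonneg: "\<forall>s\<in>S. 0 \<le> \<rho> s"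
    and "s \<in> S" "s' \<in> S" "s' \<noteq> s" "0 < \<rho> s'" "0 < Q s' s"
  shows "0 < \<rho> s"
proof -
  have "0 < \<rho> s' * Q s' s"
    using assms by simp
  also have "\<dots> \<le> (\<Sum>y\<in>S - {s}. \<rho> y * Q y s)"
    using assms by (intro member_le_sum) auto
  also have "\<dots> = \<rho> s * (\<Sum>y\<in>S - {s}. Q s y)"
    using bal \<open>s \<in> S\<close> unfolding balanced_def by (simp add: sum_distrib_left)
  finally have "\<rho> s \<noteq> 0"
    by auto
  then show ?thesis
    using \<rho>_nonneg \<open>s \<in> S\<close> by force
qed

definition jump :: "'s set \<Rightarrow> ('s \<Rightarrow> 's \<Rightarrow> real) \<Rightarrow> 's \<Rightarrow> 's \<Rightarrow> bool" where
  "jump S Q s s' \<longleftrightarrow> s' \<in> S \<and> s' \<noteq> s \<and> 0 < Q s s'"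

lemma jump_rtranclp_closed:
  assumes "(jump S Q)\<^sup>*\<^sup>* s s'" and "s \<in> S"
  shows "s' \<in> S"
  using assms by (induction rule: rtranclp_induct) (auto simp: jump_def)

lemma balanced_positive_reachable:
  assumes fin: "finite S" and Q_nonneg: "\<forall>s\<in>S. \<forall>s'\<in>S. 0 \<le> Q s s'"
    and bal: "balanced S Q \<nu>"
    and reach: "(jump S Q)\<^sup>*\<^sup>* s s'" and "s \<in> S" and "0 < \<nu> s"
  shows "0 < \<nu> s'"
proof -
  define \<rho> where "\<rho> s = max (\<nu> s) 0" for s
  have bal_\<rho>: "balanced S Q \<rho>"
    unfolding \<rho>_def using balanced_positive_part[OF fin Q_nonneg bal] .
  from reach have "0 < \<rho> s'"
  proof (induction rule: rtranclp_induct)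
    case base
    then show ?case
      using \<open>0 < \<nu> s\<close> by (simp add: \<rho>_def)
  next
    case (step y z)
    have "y \<in> S"
      using jump_rtranclp_closed[OF step.hyps(1) \<open>s \<in> S\<close>] .
    then show ?case
      using step balanced_nonneg_positive_step[OF fin Q_nonneg bal_\<rho>, of z y]
      by (auto simp: jump_def \<rho>_def)
  qed
  then show ?thesis
    by (simp add: \<rho>_def)
qed

lemma sum_eq_0_ex_pos:
  fixes \<nu> :: "'a \<Rightarrow> real"
  assumes "finite S" "sum \<nu> S = 0" "s \<in> S" "\<nu> s < 0"
  shows "\<exists>x\<in>S. 0 < \<nu> x"
proof (rule ccontr)
  assume "\<not> ?thesis"
  then have "sum \<nu> S < sum (\<lambda>_. 0) S"
    using assms by (intro sum_strict_mono_ex1) (auto simp: not_less)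
  then show False
    using assms by simp
qed

text \<open>Mass of either sign would have to reach the common state \<open>c\<close>.\<close>
lemma balanced_zero_sum_nonpos:
  assumes fin: "finite S" and Q_nonneg: "\<forall>s\<in>S. \<forall>s'\<in>S. 0 \<le> Q s s'"
    and bal: "balanced S Q \<nu>" and sum_0: "sum \<nu> S = 0"
    and reach: "\<forall>s\<in>S. (jump S Q)\<^sup>*\<^sup>* s c" and "s \<in> S"
  shows "\<nu> s \<le> 0"
proof (rule ccontr)
  assume "\<not> \<nu> s \<le> 0"
  then have "0 < \<nu> c"
    using balanced_positive_reachable[OF fin Q_nonneg bal] reach \<open>s \<in> S\<close> by auto
  have "sum (\<lambda>s. - \<nu> s) S = 0" "- \<nu> s < 0"
    using sum_0 \<open>\<not> \<nu> s \<le> 0\<close> by (simp_all add: sum_negf)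
  then obtain y where "y \<in> S" "0 < - \<nu> y"
    using sum_eq_0_ex_pos[OF fin] \<open>s \<in> S\<close> by blast
  then have "0 < - \<nu> c"
    using balanced_positive_reachable[OF fin Q_nonneg balanced_uminus[OF bal]] reach by auto
  with \<open>0 < \<nu> c\<close> show False
    by simp
qed

lemma stationary_unique:
  assumes fin: "finite S" and Q_nonneg: "\<forall>s\<in>S. \<forall>s'\<in>S. 0 \<le> Q s s'"
    and "stationary S Q \<pi>" and "stationary S Q \<mu>"
    and reach: "\<forall>s\<in>S. (jump S Q)\<^sup>*\<^sup>* s c" and "s \<in> S"
  shows "\<pi> s = \<mu> s"
proof -
  define \<nu> where "\<nu> s = \<pi> s - \<mu> s" for s
  have bal: "balanced S Q \<nu>"
    using assms balanced_diff unfolding stationary_iff_balanced \<nu>_def by blast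
  have sum_0: "sum \<nu> S = 0"
    using assms unfolding stationary_iff_balanced \<nu>_def by (simp add: sum_subtractf)
  have "\<nu> s \<le> 0"
    using balanced_zero_sum_nonpos[OF fin Q_nonneg bal sum_0 reach \<open>s \<in> S\<close>] .
  moreover have "- \<nu> s \<le> 0"
    using balanced_zero_sum_nonpos[OF fin Q_nonneg balanced_uminus[OF bal] _ reach \<open>s \<in> S\<close>]
      sum_0 by (simp add: sum_negf)
  ultimately show ?thesis
    by (simp add: \<nu>_def)
qed

lemma stationary_pushforward:
  assumes fin_S: "finite S" and fin_T: "finite T" and f_S: "f ` S \<subseteq> T"
    and lump: "\<And>s t. s \<in> S \<Longrightarrow> t \<in> T \<Longrightarrow> (\<Sum>s'\<in>{s'\<in>S. f s' = t}. Q s s') = Q' (f s) t"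
    and stat: "stationary S Q \<pi>"
  shows "stationary T Q' (\<lambda>t. \<Sum>s\<in>{s\<in>S. f s = t}. \<pi> s)"
proof -
  define \<mu> where "\<mu> t = (\<Sum>s\<in>{s\<in>S. f s = t}. \<pi> s)" for t
  have group: "(\<Sum>t\<in>T. \<Sum>s\<in>{s\<in>S. f s = t}. g s) = sum g S" for g :: "_ \<Rightarrow> real"
    using sum.group[OF fin_S fin_T f_S] .
  have bal_\<pi>: "\<forall>s\<in>S. (\<Sum>s'\<in>S. \<pi> s * Q s s') = (\<Sum>s'\<in>S. \<pi> s' * Q s' s)"
    using stat fin_S unfolding stationary_iff_balanced balanced_iff_full_sums[OF fin_S] by blast
  have "(\<Sum>t'\<in>T. \<mu> t * Q' t t') = (\<Sum>t'\<in>T. \<mu> t' * Q' t' t)" if "t \<in> T" for t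
  proof -
    have "(\<Sum>t'\<in>T. \<mu> t * Q' t t') = \<mu> t * (\<Sum>t'\<in>T. Q' t t')"
      by (simp add: sum_distrib_left)
    also have "\<dots> = (\<Sum>s\<in>{s\<in>S. f s = t}. \<pi> s * (\<Sum>t'\<in>T. Q' t t'))"
      by (simp add: \<mu>_def sum_distrib_right)
    also have "\<dots> = (\<Sum>s\<in>{s\<in>S. f s = t}. \<Sum>s'\<in>S. \<pi> s * Q s s')"
    proof (rule sum.cong[OF refl])
      fix s assume "s \<in> {s\<in>S. f s = t}"
      then have "(\<Sum>t'\<in>T. Q' t t') = (\<Sum>s'\<in>S. Q s s')"
        using lump group[of "Q s"] by auto
      then show "\<pi> s * (\<Sum>t'\<in>T. Q' t t') = (\<Sum>s'\<in>S. \<pi> s * Q s s')"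
        by (simp add: sum_distrib_left)
    qed
    also have "\<dots> = (\<Sum>s\<in>{s\<in>S. f s = t}. \<Sum>s'\<in>S. \<pi> s' * Q s' s)"
      using bal_\<pi> by simp
    also have "\<dots> = (\<Sum>s'\<in>S. \<pi> s' * Q' (f s') t)"
      by (subst sum.swap) (simp add: lump \<open>t \<in> T\<close> flip: sum_distrib_left)
    also have "\<dots> = (\<Sum>t'\<in>T. \<mu> t' * Q' t' t)"
      unfolding \<mu>_def by (simp add: sum_distrib_right flip: group)
    finally show ?thesis .
  qed
  then have "balanced T Q' \<mu>"
    unfolding balanced_iff_full_sums[OF fin_T] by blast
  moreover have "sum \<mu> T = 1"
    using stat unfolding \<mu>_def group stationary_iff_balanced by simp
  moreover have "\<forall>t\<in>T. 0 \<le> \<mu> t"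
    using stat unfolding \<mu>_def stationary_iff_balanced by (auto intro: sum_nonneg)
  ultimately show ?thesis
    unfolding stationary_iff_balanced \<mu>_def by blast
qed

definition particle_sites :: "nat option list \<Rightarrow> nat list" where
  "particle_sites u = filter (\<lambda>i. u ! i \<noteq> None) [0..<length u]"

definition particle_labels :: "nat option list \<Rightarrow> nat list" where
  "particle_labels u = map the (filter (\<lambda>x. x \<noteq> None) u)"

lemma particle_labels_simps [simp]:
  "particle_labels [] = []"
  "particle_labels (None # u) = particle_labels u"
  "particle_labels (Some k # u) = k # particle_labels u"
  "particle_labels (u @ v) = particle_labels u @ particle_labels v"
  by (simp_all add: particle_labels_def)

lemma particle_labels_conv_sites: "particle_labels u = map (\<lambda>i. the (u ! i)) (particle_sites u)"
proof -
  have "filter (\<lambda>x. x \<noteq> None) u = map ((!) u) (particle_sites u)"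
    unfolding particle_sites_def by (subst (1) map_nth[symmetric]) (simp add: filter_map comp_def)
  then show ?thesis
    unfolding particle_labels_def by simp
qed

lemma length_particle_labels: "length (particle_labels u) = length (particle_sites u)"
  by (simp add: particle_labels_conv_sites)

lemma set_particle_sites: "set (particle_sites u) = {i. i < length u \<and> u ! i \<noteq> None}"
  unfolding particle_sites_def by auto

lemma sorted_particle_sites: "sorted_wrt (<) (particle_sites u)"
  unfolding particle_sites_def by (simp add: sorted_wrt_filter)

lemma particle_site_less: "j < length (particle_sites u) \<Longrightarrow> particle_sites u ! j < length u"
  using nth_mem set_particle_sites by blast

lemma nth_particle_site:
  "j < length (particle_sites u) \<Longrightarrow> u ! (particle_sites u ! j) = Some (particle_labels u ! j)"
  using nth_mem[of j "particle_sites u"] by (auto simp: set_particle_sites particle_labels_conv_sites)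

lemma particle_site_index:
  assumes "i < length u" "u ! i \<noteq> None"
  obtains j where "j < length (particle_sites u)" "particle_sites u ! j = i"
proof -
  have "i \<in> set (particle_sites u)"
    using assms by (simp add: set_particle_sites)
  then show thesis
    using that by (auto simp: in_set_conv_nth)
qed

lemma particle_sites_less_iff:
  assumes "i < length (particle_sites u)" "j < length (particle_sites u)"
  shows "particle_sites u ! i < particle_sites u ! j \<longleftrightarrow> i < j"
  using assms sorted_wrt_nth_less[OF sorted_particle_sites, of i j u]
    sorted_wrt_nth_less[OF sorted_particle_sites, of j i u]
  by (cases i j rule: linorder_cases) auto

lemma empty_site_if_no_index:
  assumes "x < length u" and "\<And>l. l < length (particle_sites u) \<Longrightarrow> particle_sites u ! l \<noteq> x"
  shows "u ! x = None"
  using assms by (cases "u ! x") (auto elim: particle_site_index)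

lemma next_dist_eqI:
  assumes "0 < d" "u ! ((i + d) mod L) \<noteq> None"
    and "\<And>d'. 0 < d' \<Longrightarrow> d' < d \<Longrightarrow> u ! ((i + d') mod L) = None"
  shows "next_dist L u i = d"
  unfolding next_dist_def
proof (rule Least_equality)
  fix d' assume "0 < d' \<and> u ! ((i + d') mod L) \<noteq> None"
  then show "d \<le> d'"
    using assms(3)[of d'] by (cases "d' < d") auto
qed (use assms in simp)

lemma next_dist_gap:
  assumes "0 < d" "d < next_dist L u i"
  shows "u ! ((i + d) mod L) = None"
  using not_less_Least[OF assms(2)[unfolded next_dist_def]] assms(1) by auto

lemma next_dist_occupied:
  assumes "0 < L" "i < L" "u ! i \<noteq> None"
  shows "0 < next_dist L u i" "next_dist L u i \<le> L" "u ! ((i + next_dist L u i) mod L) \<noteq> None"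
proof -
  have witness: "0 < L \<and> u ! ((i + L) mod L) \<noteq> None"
    using assms by simp
  show "0 < next_dist L u i" "u ! ((i + next_dist L u i) mod L) \<noteq> None"
    using LeastI[of "\<lambda>d. 0 < d \<and> u ! ((i + d) mod L) \<noteq> None", OF witness]
    unfolding next_dist_def by auto
  show "next_dist L u i \<le> L"
    unfolding next_dist_def using witness by (rule Least_le)
qed

lemma prev_dist_gap:
  assumes "0 < d" "d < prev_dist L u i"
  shows "u ! ((i + L - d) mod L) = None"
  using not_less_Least[OF assms(2)[unfolded prev_dist_def]] assms(1) by auto

lemma prev_dist_occupied:
  assumes "0 < L" "i < L" "u ! i \<noteq> None"
  shows "0 < prev_dist L u i" "prev_dist L u i \<le> L"
proof -
  have witness: "0 < L \<and> u ! ((i + L - L) mod L) \<noteq> None"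
    using assms by simp
  show "0 < prev_dist L u i"
    using LeastI[of "\<lambda>d. 0 < d \<and> u ! ((i + L - d) mod L) \<noteq> None", OF witness]
    unfolding prev_dist_def by auto
  show "prev_dist L u i \<le> L"
    unfolding prev_dist_def using witness by (rule Least_le)
qed

lemma next_particle_site:
  assumes len: "length u = L" and j: "j < length (particle_sites u)"
  defines "s \<equiv> particle_sites u" and "m \<equiv> length (particle_sites u)"
  shows "(s ! j + next_dist L u (s ! j)) mod L = s ! (Suc j mod m)"
proof -
  have "j < m"
    using j unfolding m_def .
  have s_less: "l < m \<Longrightarrow> s ! l < L" for l
    unfolding s_def m_def len[symmetric] by (rule particle_site_less)
  have less_iff: "l < m \<Longrightarrow> l' < m \<Longrightarrow> s ! l < s ! l' \<longleftrightarrow> l < l'" for l l'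
    unfolding s_def m_def by (rule particle_sites_less_iff)
  have mono: "s ! l \<le> s ! l'" if "l \<le> l'" "l' < m" for l l'
    using less_iff[of l l'] that by (cases "l = l'") auto
  have occupied: "l < m \<Longrightarrow> u ! (s ! l) \<noteq> None" for l
    using nth_particle_site unfolding s_def m_def by simp
  have empty: "u ! x = None" if "\<And>l. l < m \<Longrightarrow> s ! l \<noteq> x" "x < L" for x
    by (rule empty_site_if_no_index) (use that len in \<open>simp_all add: s_def m_def\<close>)
  show ?thesis
  proof (cases "Suc j < m")
    case True
    have lt: "s ! j < s ! Suc j"
      using less_iff[OF \<open>j < m\<close> True] by simp
    have "next_dist L u (s ! j) = s ! Suc j - s ! j"
    proof (rule next_dist_eqI)
      fix d assume d: "0 < d" "d < s ! Suc j - s ! j"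
      have "s ! l \<noteq> s ! j + d" if "l < m" for l
        using mono[of l j] mono[of "Suc j" l] \<open>j < m\<close> that d by (cases "l \<le> j") auto
      moreover have "s ! j + d < L"
        using d s_less[OF True] by linarith
      ultimately have "u ! (s ! j + d) = None"
        by (rule empty)
      then show "u ! ((s ! j + d) mod L) = None"
        using d s_less[OF True] by simp
    qed (use lt s_less[OF True] occupied[OF True] in auto)
    then show ?thesis
      using True lt s_less[OF True] by simp
  next
    case False
    then have last: "Suc j = m"
      using \<open>j < m\<close> by simp
    have "0 < m"
      using \<open>j < m\<close> by simp
    have "s ! j < L" "s ! 0 < L"
      using s_less[OF \<open>j < m\<close>] s_less[OF \<open>0 < m\<close>] .
    have "next_dist L u (s ! j) = L - s ! j + s ! 0"
    proof (rule next_dist_eqI)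
      fix d assume d: "0 < d" "d < L - s ! j + s ! 0"
      show "u ! ((s ! j + d) mod L) = None"
      proof (cases "s ! j + d < L")
        case True
        have "s ! l \<noteq> s ! j + d" if "l < m" for l
        proof -
          have "l \<le> j"
            using that last by simp
          then show ?thesis
            using mono[of l j] \<open>j < m\<close> d(1) by simp
        qed
        then have "u ! (s ! j + d) = None"
          using True by (rule empty)
        then show ?thesis
          using True by simp
      next
        case False
        have "s ! l \<noteq> s ! j + d - L" if "l < m" for l
          using mono[of 0 l] that d False \<open>s ! j < L\<close> by simp
        moreover have "s ! j + d - L < L"
          using d \<open>s ! 0 < L\<close> \<open>s ! j < L\<close> by linarith
        ultimately have "u ! (s ! j + d - L) = None"
          by (rule empty)
        moreover have "(s ! j + d) mod L = s ! j + d - L"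
          using d False \<open>s ! 0 < L\<close> \<open>s ! j < L\<close> by (simp add: le_mod_geq)
        ultimately show ?thesis
          by simp
      qed
    next
      have "(s ! j + (L - s ! j + s ! 0)) mod L = s ! 0"
        using \<open>s ! j < L\<close> \<open>s ! 0 < L\<close> by simp
      then show "u ! ((s ! j + (L - s ! j + s ! 0)) mod L) \<noteq> None"
        using occupied[OF \<open>0 < m\<close>] by simp
    qed (use \<open>s ! j < L\<close> in simp)
    then show ?thesis
      using \<open>s ! j < L\<close> \<open>s ! 0 < L\<close> last by simp
  qed
qed

lemma set_particle_labels: "set (particle_labels u) = {k. \<exists>i<length u. u ! i = Some k}"
  unfolding particle_labels_def by (force simp: in_set_conv_nth[symmetric])

lemma distinct_particle_labels_iff:
  "distinct (particle_labels u) \<longleftrightarrow>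
     (\<forall>i<length u. \<forall>i'<length u. u ! i \<noteq> None \<longrightarrow> u ! i = u ! i' \<longrightarrow> i = i')"
proof -
  have "distinct (particle_sites u)"
    using sorted_particle_sites strict_sorted_iff by blast
  moreover have "the (u ! i) = the (u ! i') \<longleftrightarrow> u ! i = u ! i'"
    if "u ! i \<noteq> None" "u ! i' \<noteq> None" for i i'
    using that by auto
  ultimately show ?thesis
    unfolding particle_labels_conv_sites by (auto simp: distinct_map inj_on_def set_particle_sites)
qed

lemma wf_lab_iff_labels:
  "wf_lab L n u \<longleftrightarrow> length u = L \<and> distinct (particle_labels u) \<and> set (particle_labels u) = {..<n}
     \<and> (\<forall>j<length (particle_labels u).
           particle_labels u ! (Suc j mod length (particle_labels u)) = Suc (particle_labels u ! j) mod n)"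
  (is "_ \<longleftrightarrow> _ \<and> ?distinct \<and> ?set \<and> ?succ")
proof (cases "length u = L")
  case len: True
  have succ_less: "Suc j mod length (particle_sites u) < length (particle_sites u)"
    if "j < length (particle_sites u)" for j
    using that by (intro mod_less_divisor) auto
  have labels_less: "(\<forall>i<L. \<forall>k. u ! i = Some k \<longrightarrow> k < n) \<longleftrightarrow> set (particle_labels u) \<subseteq> {..<n}"
    using len by (auto simp: set_particle_labels)
  have once: "(\<forall>k<n. \<exists>!i. i < L \<and> u ! i = Some k) \<longleftrightarrow>
      {..<n} \<subseteq> set (particle_labels u)
      \<and> (\<forall>i<L. \<forall>i'<L. \<forall>k<n. u ! i = Some k \<longrightarrow> u ! i' = Some k \<longrightarrow> i = i')"
    using len by (auto simp: set_particle_labels)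
  have "(\<forall>i<L. \<forall>i'<L. \<forall>k<n. u ! i = Some k \<longrightarrow> u ! i' = Some k \<longrightarrow> i = i') \<longleftrightarrow> ?distinct"
    if "?set"
  proof -
    have "u ! i \<noteq> None \<longleftrightarrow> (\<exists>k<n. u ! i = Some k)" if "i < L" for i
      using \<open>?set\<close> \<open>i < L\<close> len by (auto simp: set_particle_labels)
    then show ?thesis
      unfolding distinct_particle_labels_iff len by metis
  qed
  then have "(\<forall>i<L. \<forall>k. u ! i = Some k \<longrightarrow> k < n) \<and> (\<forall>k<n. \<exists>!i. i < L \<and> u ! i = Some k)
      \<longleftrightarrow> ?distinct \<and> ?set"
    unfolding labels_less once by blast
  moreover have "(\<forall>i<L. \<forall>k. u ! i = Some k \<longrightarrow> u ! ((i + next_dist L u i) mod L) = Some (Suc k mod n))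
      \<longleftrightarrow> ?succ"
    (is "?next \<longleftrightarrow> _")
  proof
    assume ?next
    show ?succ
    proof (intro allI impI)
      fix j assume "j < length (particle_labels u)"
      then have j: "j < length (particle_sites u)"
        by (simp add: length_particle_labels)
      have "u ! ((particle_sites u ! j + next_dist L u (particle_sites u ! j)) mod L)
          = Some (Suc (particle_labels u ! j) mod n)"
        using \<open>?next\<close> particle_site_less[OF j] nth_particle_site[OF j] len by simp
      then show "particle_labels u ! (Suc j mod length (particle_labels u)) = Suc (particle_labels u ! j) mod n"
        using next_particle_site[OF len j] nth_particle_site[OF succ_less[OF j]]
        by (simp add: length_particle_labels)
    qed
  next
    assume ?succ
    show ?next
    proof (intro allI impI)
      fix i k assume "i < L" "u ! i = Some k"
      then obtain j where j: "j < length (particle_sites u)" "particle_sites u ! j = i"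
        using len by (auto elim: particle_site_index)
      then show "u ! ((i + next_dist L u i) mod L) = Some (Suc k mod n)"
        using \<open>?succ\<close> \<open>u ! i = Some k\<close> next_particle_site[OF len j(1)] nth_particle_site[OF j(1)]
          nth_particle_site[OF succ_less[OF j(1)]]
        by (simp add: length_particle_labels)
    qed
  qed
  ultimately show ?thesis
    unfolding wf_lab_def using len by argo
qed (simp add: wf_lab_def)

lemma nth_rotate_upt: "j < n \<Longrightarrow> rotate r [0..<n] ! j = (r + j) mod n"
  by (simp add: nth_rotate)

lemma cyclic_succession_iff_rotate:
  "distinct ls \<and> set ls = {..<n} \<and> (\<forall>j<length ls. ls ! (Suc j mod length ls) = Suc (ls ! j) mod n)
     \<longleftrightarrow> (\<exists>r. ls = rotate r [0..<n])"
proof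
  assume H: "distinct ls \<and> set ls = {..<n} \<and> (\<forall>j<length ls. ls ! (Suc j mod length ls) = Suc (ls ! j) mod n)"
  then have len: "length ls = n"
    using distinct_card[of ls] by simp
  have succ: "ls ! (Suc j mod n) = Suc (ls ! j) mod n" if "j < n" for j
    using H[THEN conjunct2, THEN conjunct2, rule_format, of j] that len by simp
  have "ls ! j = (ls ! 0 + j) mod n" if "j < n" for j
    using that
  proof (induction j)
    case 0
    then have "ls ! 0 \<in> set ls"
      using len by simp
    then show ?case
      using H by simp
  next
    case (Suc j)
    have "ls ! Suc j = Suc (ls ! j) mod n"
      using succ[of j] Suc.prems by simp
    then show ?case
      using Suc by (simp add: mod_Suc_eq)
  qed
  then have "ls = rotate (ls ! 0) [0..<n]"
    using len by (auto intro!: nth_equalityI simp: nth_rotate_upt)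
  then show "\<exists>r. ls = rotate r [0..<n]" ..
next
  assume "\<exists>r. ls = rotate r [0..<n]"
  then obtain r where r: "ls = rotate r [0..<n]" ..
  have "ls ! (Suc j mod n) = Suc (ls ! j) mod n" if "j < n" for j
    using that by (simp add: r nth_rotate_upt mod_add_right_eq mod_Suc_eq)
  then show "distinct ls \<and> set ls = {..<n} \<and> (\<forall>j<length ls. ls ! (Suc j mod length ls) = Suc (ls ! j) mod n)"
    by (simp add: r lessThan_atLeast0)
qed

lemma wf_lab_iff_rotate:
  "wf_lab L n u \<longleftrightarrow> length u = L \<and> (\<exists>r. particle_labels u = rotate r [0..<n])"
  by (simp only: wf_lab_iff_labels cyclic_succession_iff_rotate)

lemma rotate1_mem_rotations_iff: "(\<exists>r. rotate1 xs = rotate r ys) \<longleftrightarrow> (\<exists>r. xs = rotate r ys)"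
proof
  assume "\<exists>r. rotate1 xs = rotate r ys"
  then obtain r where "rotate1 xs = rotate r ys" ..
  moreover have "rotate (length xs - 1) (rotate1 xs) = xs"
    by (cases xs) (simp_all add: rotate_append)
  ultimately have "xs = rotate (length xs - 1 + r) ys"
    by (simp add: rotate_rotate)
  then show "\<exists>r. xs = rotate r ys" ..
next
  assume "\<exists>r. xs = rotate r ys"
  then obtain r where "xs = rotate r ys" ..
  then have "rotate1 xs = rotate (Suc r) ys"
    by simp
  then show "\<exists>r. rotate1 xs = rotate r ys" ..
qed

lemma particle_labels_swap_adjacent:
  assumes "Suc i < length u" "u ! i = None \<or> u ! Suc i = None"
  shows "particle_labels (u[i := u ! Suc i, Suc i := u ! i]) = particle_labels u"
proof -
  define A C where "A = take i u" and "C = drop (Suc (Suc i)) u"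
  have u: "u = A @ u ! i # u ! Suc i # C" and "length A = i"
    using assms(1) by (simp_all add: A_def C_def Cons_nth_drop_Suc)
  have "(A @ u ! i # u ! Suc i # C)[i := u ! Suc i, Suc i := u ! i] = A @ u ! Suc i # u ! i # C"
    using \<open>length A = i\<close> by (simp add: list_update_append)
  then have "u[i := u ! Suc i, Suc i := u ! i] = A @ u ! Suc i # u ! i # C"
    using u by simp
  then show ?thesis
    using assms(2) by (subst (2) u) (cases "u ! i"; cases "u ! Suc i"; simp)
qed

lemma particle_labels_wrap:
  assumes "2 \<le> length u" "u ! 0 = None" "u ! (length u - 1) = Some k"
  shows "rotate1 (particle_labels (u[length u - 1 := None, 0 := Some k])) = particle_labels u"
proof -
  obtain a v where "u = a # v"
    using assms(1) by (cases u) auto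
  moreover obtain M b where "v = M @ [b]"
    using calculation assms(1) by (cases v rule: rev_cases) auto
  ultimately have u: "u = None # M @ [Some k]"
    using assms(2,3) by (simp add: nth_append)
  then have "u[length u - 1 := None, 0 := Some k] = Some k # M @ [None]"
    by (simp add: list_update_append)
  then show ?thesis
    using u by simp
qed

text \<open>A particle hopping onto an empty neighbouring site keeps the cyclic order of the labels;
  only when it crosses the boundary between positions \<open>L - 1\<close> and \<open>0\<close> is the list of labels
  rotated.\<close>
lemma wf_lab_hop_right_iff:
  assumes len: "length u = L" and i: "i < L" and "u ! i = Some k" "u ! nxt L i = None"
  shows "wf_lab L n (u[i := None, nxt L i := Some k]) \<longleftrightarrow> wf_lab L n u"
proof (cases "Suc i < L")
  case True
  then have "u[i := None, nxt L i := Some k] = u[i := u ! Suc i, Suc i := u ! i]"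
    using assms by (simp add: nxt_def)
  moreover have "particle_labels (u[i := u ! Suc i, Suc i := u ! i]) = particle_labels u"
    using True assms by (intro particle_labels_swap_adjacent) (simp_all add: nxt_def)
  ultimately show ?thesis
    using len by (simp add: wf_lab_iff_rotate)
next
  case False
  then have "Suc i = L"
    using i by simp
  then have last: "i = L - 1" "nxt L i = 0"
    by (simp_all add: nxt_def)
  have "i \<noteq> 0"
    using assms last by auto
  then have "2 \<le> L"
    using last by simp
  then have "rotate1 (particle_labels (u[i := None, nxt L i := Some k])) = particle_labels u"
    using particle_labels_wrap[of u k] assms last by simp
  then show ?thesis
    using len rotate1_mem_rotations_iff[of "particle_labels (u[i := None, nxt L i := Some k])" "[0..<n]"]
    by (simp add: wf_lab_iff_rotate)
qed

lemma nxt_prv: "i < L \<Longrightarrow> nxt L (prv L i) = i"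
  by (cases i) (simp_all add: nxt_def prv_def)

lemma prv_eq: "i < L \<Longrightarrow> prv L i = (if i = 0 then L - 1 else i - 1)"
  by (cases i) (simp_all add: prv_def)

lemma wf_lab_hop_left_iff:
  assumes len: "length u = L" and i: "i < L" and "u ! i = Some k" "u ! prv L i = None"
  shows "wf_lab L n (u[prv L i := Some k, i := None]) \<longleftrightarrow> wf_lab L n u"
proof -
  define u' where "u' = u[prv L i := Some k, i := None]"
  have "prv L i \<noteq> i" "prv L i < L"
    using assms by (auto simp: prv_def)
  then have "u' ! prv L i = Some k" "u' ! nxt L (prv L i) = None" "length u' = L"
    using assms by (simp_all add: u'_def nxt_prv)
  then have "wf_lab L n (u'[prv L i := None, nxt L (prv L i) := Some k]) \<longleftrightarrow> wf_lab L n u'"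
    using \<open>prv L i < L\<close> by (intro wf_lab_hop_right_iff)
  moreover have "u'[prv L i := None, nxt L (prv L i) := Some k] = u[prv L i := u ! prv L i, i := u ! i]"
    using assms nxt_prv[OF i] \<open>prv L i \<noteq> i\<close> by (simp add: u'_def list_update_swap)
  ultimately show ?thesis
    unfolding u'_def by simp
qed

lemma trate_nonneg:
  assumes "\<And>i t r. i < N \<Longrightarrow> mv s i = Some (t, r) \<Longrightarrow> 0 \<le> r"
  shows "0 \<le> trate mv N s s'"
  unfolding trate_def using assms by (intro sum_nonneg) (auto split: option.split)

lemma trate_pos:
  assumes "\<And>i t r. i < N \<Longrightarrow> mv s i = Some (t, r) \<Longrightarrow> 0 \<le> r"
    and "i < N" "mv s i = Some (t, r)" "0 < r"
  shows "0 < trate mv N s t"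
proof -
  have "0 < (case mv s i of None \<Rightarrow> 0 | Some (t', r) \<Rightarrow> if t' = t then r else 0)"
    using assms by simp
  also have "\<dots> \<le> trate mv N s t"
    unfolding trate_def using assms by (intro member_le_sum) (auto split: option.split)
  finally show ?thesis .
qed

lemma length_Psi: "\<psi> \<in> Psi L n \<Longrightarrow> length \<psi> = L"
  unfolding Psi_def wf_lab_def by simp

lemma plab_eq_iff [simp]: "plab x = None \<longleftrightarrow> x = Vac" "plab x = Some k \<longleftrightarrow> x = PPt k"
  by (cases x; simp)+

lemma label_less_Psi: "\<psi> \<in> Psi L n \<Longrightarrow> i < L \<Longrightarrow> \<psi> ! i = PPt k \<Longrightarrow> k < n"
  unfolding Psi_def wf_lab_def by force

lemma pmove_SomeE:
  assumes "pmove L p q \<psi> i = Some (t, r)" "i < 2 * L"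
  obtains k where "i < L" "\<psi> ! i = PPt k" "\<psi> ! nxt L i = Vac" "r = p k"
      "t = \<psi>[i := Vac, nxt L i := PPt k]"
    | k where "L \<le> i" "\<psi> ! (i - L) = PPt k" "\<psi> ! prv L (i - L) = Vac" "r = q k"
      "t = \<psi>[prv L (i - L) := PPt k, i - L := Vac]"
proof (cases "i < L")
  case True
  then show ?thesis
    using assms that(1) unfolding pmove_def by (auto split: pletter.splits)
next
  case False
  then have "i div L = 1" "i mod L = i - L"
    using assms(2) by (simp_all add: div_if mod_if)
  then show ?thesis
    using assms that(2) False unfolding pmove_def by (auto simp: Let_def split: pletter.splits)
qed

lemma pmove_rate_pos:
  assumes "\<psi> \<in> Psi L n" "\<forall>k<n. 0 < p k \<and> 0 < q k"
    and "i < 2 * L" "pmove L p q \<psi> i = Some (t, r)"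
  shows "0 < r"
proof -
  have "i - L < L"
    using assms(3) by simp
  from assms(4,3) show ?thesis
    by (cases rule: pmove_SomeE) (use assms(2) label_less_Psi[OF assms(1)] \<open>i - L < L\<close> in auto)
qed

lemma QPsi_nonneg:
  assumes "\<psi> \<in> Psi L n" "\<forall>k<n. 0 < p k \<and> 0 < q k"
  shows "0 \<le> QPsi L p q \<psi> \<psi>'"
  unfolding QPsi_def using pmove_rate_pos[OF assms] by (intro trate_nonneg) (simp add: less_imp_le)

lemma pmove_hop_left:
  assumes "i < L" "\<psi> ! prv L i = Vac" "\<psi> ! i = PPt k"
  shows "pmove L p q \<psi> (L + i) = Some (\<psi>[prv L i := PPt k, i := Vac], q k)"
proof -
  have "(L + i) div L = 1" "(L + i) mod L = i"
    using assms(1) by auto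
  then show ?thesis
    using assms unfolding pmove_def by simp
qed

lemma jump_hop_left:
  assumes \<psi>: "\<psi> \<in> Psi L n" and pos: "\<forall>k<n. 0 < p k \<and> 0 < q k"
    and "i < L" "\<psi> ! prv L i = Vac" "\<psi> ! i = PPt k"
  shows "jump (Psi L n) (QPsi L p q) \<psi> (\<psi>[prv L i := PPt k, i := Vac])"
proof -
  let ?\<psi>' = "\<psi>[prv L i := PPt k, i := Vac]"
  have len: "length \<psi> = L"
    using length_Psi[OF \<psi>] .
  have "map plab ?\<psi>' = (map plab \<psi>)[prv L i := Some k, i := None]"
    by (simp add: map_update)
  moreover have "wf_lab L n ((map plab \<psi>)[prv L i := Some k, i := None])"
    using \<psi> assms(3-5) len wf_lab_hop_left_iff[of "map plab \<psi>" L i k n]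
    by (simp add: Psi_def prv_def)
  ultimately have "?\<psi>' \<in> Psi L n"
    by (simp add: Psi_def)
  moreover have "?\<psi>' \<noteq> \<psi>"
    using assms len by (auto dest: arg_cong[where f = "\<lambda>xs. xs ! i"])
  moreover have "0 < q k"
    using pos label_less_Psi[OF \<psi> assms(3,5)] by simp
  then have "0 < QPsi L p q \<psi> ?\<psi>'"
    unfolding QPsi_def using pmove_rate_pos[OF \<psi> pos] pmove_hop_left[OF assms(3-5)] assms(3)
    by (intro trate_pos[where i = "L + i"]) (auto intro: less_imp_le)
  ultimately show ?thesis
    unfolding jump_def by blast
qed

lemma hd_rotate1: "xs \<noteq> [] \<Longrightarrow> hd (rotate1 xs) = xs ! (Suc 0 mod length xs)"
  using nth_rotate1[of 0 xs] by (simp add: hd_conv_nth)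

definition occupied_sum :: "nat option list \<Rightarrow> nat" where
  "occupied_sum u = (\<Sum>x<length u. if u ! x = None then 0 else x)"

lemma occupied_sum_update:
  assumes "a < length u"
  shows "occupied_sum (u[a := v]) + (if u ! a = None then 0 else a)
    = occupied_sum u + (if v = None then 0 else a)"
proof -
  have split: "occupied_sum w = (if w ! a = None then 0 else a)
      + (\<Sum>x\<in>{..<length u} - {a}. if w ! x = None then 0 else x)" if "length w = length u" for w
    unfolding occupied_sum_def that using assms by (simp add: sum.remove)
  have "(\<Sum>x\<in>{..<length u} - {a}. if u[a := v] ! x = None then 0 else x)
      = (\<Sum>x\<in>{..<length u} - {a}. if u ! x = None then 0 else x)"
    by (intro sum.cong) auto
  then show ?thesis
    using split[of u] split[of "u[a := v]"] assms by simp
qed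

text \<open>Potential for the irreducibility argument: hopping a particle to the left lowers the
  sum of occupied positions by one, except when it wraps from position \<open>0\<close> to \<open>L - 1\<close>;
  then the leading label increases by one (mod \<open>n\<close>), which the second term pays for.\<close>
definition hop_potential :: "nat \<Rightarrow> nat option list \<Rightarrow> nat" where
  "hop_potential n u = occupied_sum u + length u * ((n - hd (particle_labels u)) mod n)"

lemma hop_potential_hop_left:
  assumes wf: "wf_lab L n u" and i: "i < L" and u_i: "u ! i = Some k" and u_prv: "u ! prv L i = None"
    and not_origin: "i \<noteq> 0 \<or> k \<noteq> 0"
  shows "hop_potential n (u[prv L i := Some k, i := None]) + 1 = hop_potential n u"
proof -
  let ?u' = "u[prv L i := Some k, i := None]"
  have len: "length u = L"
    using wf by (simp add: wf_lab_def)
  have "prv L i < L" "prv L i \<noteq> i"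
    using i u_i u_prv by (auto simp: prv_def)
  then have occ: "occupied_sum ?u' + i = occupied_sum u + prv L i"
    using occupied_sum_update[of "prv L i" u "Some k"] occupied_sum_update[of i "u[prv L i := Some k]" None]
      u_i u_prv len i by simp
  show ?thesis
  proof (cases "i = 0")
    case False
    then have "prv L i = i - 1" "Suc (i - 1) < length u"
      using i len by (simp_all add: prv_eq)
    moreover from this have "?u' = u[i - 1 := u ! Suc (i - 1), Suc (i - 1) := u ! (i - 1)]"
      using u_i u_prv False by simp
    ultimately have "particle_labels ?u' = particle_labels u"
      using u_prv particle_labels_swap_adjacent[of "i - 1" u] by simp
    then show ?thesis
      using occ False \<open>prv L i = i - 1\<close> by (simp add: hop_potential_def)
  next
    case True
    then have "0 < k" "k < n" "prv L i = L - 1"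
      using not_origin wf u_i i by (auto simp: wf_lab_def prv_eq)
    have "u = Some k # tl u"
      using u_i True i len by (cases u) auto
    then have labels_u: "particle_labels u = k # particle_labels (tl u)"
      by (metis particle_labels_simps(3))
    have "2 \<le> L"
      using \<open>prv L i \<noteq> i\<close> True \<open>prv L i = L - 1\<close> by simp
    moreover have "?u'[L - 1 := None, 0 := Some k] = u[L - 1 := u ! (L - 1), 0 := u ! 0]"
      using True \<open>prv L i = L - 1\<close> u_i u_prv \<open>prv L i \<noteq> i\<close> by (simp add: list_update_swap)
    then have "?u'[L - 1 := None, 0 := Some k] = u"
      by simp
    ultimately have "rotate1 (particle_labels u) = particle_labels ?u'"
      using particle_labels_wrap[of ?u' k] True \<open>prv L i = L - 1\<close> \<open>prv L i \<noteq> i\<close> len by simp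
    moreover have "particle_labels u ! (Suc 0 mod length (particle_labels u)) = Suc k mod n"
      using wf labels_u unfolding wf_lab_iff_labels by (metis length_greater_0_conv list.discI nth_Cons_0)
    ultimately have "hd (particle_labels ?u') = Suc k mod n"
      using hd_rotate1[of "particle_labels u"] labels_u by simp
    have "L * ((n - Suc k mod n) mod n) + L = L * ((n - k) mod n)"
    proof (cases "Suc k < n")
      case True
      then have "n - k = Suc (n - Suc k)"
        by simp
      then show ?thesis
        using True \<open>0 < k\<close> by simp
    next
      case False
      then have "Suc k = n"
        using \<open>k < n\<close> by simp
      then show ?thesis
        using \<open>0 < k\<close> by auto
    qed
    then show ?thesis
      using occ True \<open>prv L i = L - 1\<close> labels_u
        \<open>hd (particle_labels ?u') = Suc k mod n\<close> i len
      by (simp add: hop_potential_def)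
  qed
qed

lemma wf_lab_blocked_eq_canonical:
  assumes wf: "wf_lab L n u" and "n < L"
    and blocked: "\<And>i k. i < L \<Longrightarrow> u ! i = Some k \<Longrightarrow> u ! prv L i = None \<Longrightarrow> i = 0 \<and> k = 0"
  shows "u = map (\<lambda>i. if i < n then Some i else None) [0..<L]"
proof -
  define s where "s = particle_sites u"
  have len: "length u = L"
    using wf by (simp add: wf_lab_def)
  obtain r where r: "particle_labels u = rotate r [0..<n]"
    using wf by (auto simp: wf_lab_iff_rotate)
  then have m: "length s = n"
    by (simp add: s_def flip: length_particle_labels)
  have s_less: "l < n \<Longrightarrow> s ! l < L" for l
    using particle_site_less[of l u] m len by (simp add: s_def)
  have less_iff: "l < n \<Longrightarrow> l' < n \<Longrightarrow> s ! l < s ! l' \<longleftrightarrow> l < l'" for l l'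
    using particle_sites_less_iff[of l u l'] m by (simp add: s_def)
  have empty: "u ! x = None" if "\<And>l. l < n \<Longrightarrow> s ! l \<noteq> x" "x < L" for x
    using empty_site_if_no_index[of x u] that m len by (simp add: s_def)
  have occupied: "u ! (s ! l) = Some (particle_labels u ! l)" if "l < n" for l
    using nth_particle_site[of l u] that m by (simp add: s_def)
  have left_occupied: "u ! (s ! l - 1) \<noteq> None" if "l < n" "s ! l \<noteq> 0" for l
    using blocked[OF s_less[OF that(1)] occupied[OF that(1)]] that s_less prv_eq by fastforce
  have sites: "s ! j = j" if "j < n" for j
    using that
  proof (induction j)
    case 0
    show ?case
    proof (rule ccontr)
      assume "s ! 0 \<noteq> 0"
      then have "s ! l \<noteq> s ! 0 - 1" if "l < n" for l
        using less_iff[of 0 l] that by (cases l) auto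
      then show False
        using left_occupied[OF 0 \<open>s ! 0 \<noteq> 0\<close>] empty s_less[OF 0] by fastforce
    qed
  next
    case (Suc j)
    then have "j < s ! Suc j"
      using less_iff[of j "Suc j"] by simp
    show ?case
    proof (rule ccontr)
      assume "s ! Suc j \<noteq> Suc j"
      with \<open>j < s ! Suc j\<close> have "Suc j < s ! Suc j"
        by simp
      then have "s ! l \<noteq> s ! Suc j - 1" if "l < n" for l
        using less_iff[of l j] less_iff[of "Suc j" l] that Suc by (cases "l \<le> j"; cases "l = Suc j") auto
      then show False
        using left_occupied[OF Suc.prems] empty s_less[OF Suc.prems] \<open>Suc j < s ! Suc j\<close> by fastforce
    qed
  qed
  have "particle_labels u = [0..<n]"
  proof (cases "n = 0")
    case False
    have "s ! l \<noteq> L - 1" if "l < n" for l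
      using sites that \<open>n < L\<close> by simp
    then have "u ! (L - 1) = None"
      using \<open>n < L\<close> by (intro empty) auto
    then have "u ! prv L 0 = None"
      using \<open>n < L\<close> by (simp add: prv_eq)
    then have "particle_labels u ! 0 = 0"
      using blocked[of 0] occupied[of 0] sites[of 0] False \<open>n < L\<close> by simp
    then show ?thesis
      using r False by (simp add: nth_rotate_upt)
  qed (use r in simp)
  moreover have "x \<noteq> s ! l" if "n \<le> x" "l < n" for x l
    using sites that by simp
  ultimately show ?thesis
    using len occupied sites empty by (auto intro!: nth_equalityI)
qed

definition Psi_canonical :: "nat \<Rightarrow> nat \<Rightarrow> pletter list" where
  "Psi_canonical L n = map (\<lambda>i. if i < n then PPt i else Vac) [0..<L]"

lemma map_plab_Psi_canonical:
  "map plab (Psi_canonical L n) = map (\<lambda>i. if i < n then Some i else None) [0..<L]"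
  by (simp add: Psi_canonical_def)

lemma map_plab_inj: "map plab \<psi> = map plab \<psi>' \<Longrightarrow> \<psi> = \<psi>'"
proof -
  have "inj plab"
    by (rule injI) (metis plab.elims plab_eq_iff)
  then show "map plab \<psi> = map plab \<psi>' \<Longrightarrow> \<psi> = \<psi>'"
    by simp
qed

lemma Psi_reaches_canonical:
  assumes "n < L" and pos: "\<forall>k<n. 0 < p k \<and> 0 < q k" and "\<psi> \<in> Psi L n"
  shows "(jump (Psi L n) (QPsi L p q))\<^sup>*\<^sup>* \<psi> (Psi_canonical L n)"
  using \<open>\<psi> \<in> Psi L n\<close>
proof (induction "hop_potential n (map plab \<psi>)" arbitrary: \<psi> rule: less_induct)
  case less
  let ?u = "map plab \<psi>"
  have wf: "wf_lab L n ?u" and len: "length \<psi> = L"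
    using less.prems length_Psi by (auto simp: Psi_def)
  show ?case
  proof (cases "\<psi> = Psi_canonical L n")
    case False
    have "?u \<noteq> map (\<lambda>i. if i < n then Some i else None) [0..<L]"
      using False map_plab_inj[of \<psi> "Psi_canonical L n"] by (auto simp: map_plab_Psi_canonical)
    then obtain i k where hop: "i < L" "?u ! i = Some k" "?u ! prv L i = None" "i \<noteq> 0 \<or> k \<noteq> 0"
      using wf_lab_blocked_eq_canonical[OF wf \<open>n < L\<close>] by blast
    have "prv L i < L"
      using hop(1) by (simp add: prv_def)
    then have \<psi>_hop: "\<psi> ! i = PPt k" "\<psi> ! prv L i = Vac"
      using hop len by simp_all
    define \<psi>' where "\<psi>' = \<psi>[prv L i := PPt k, i := Vac]"
    have "map plab \<psi>' = ?u[prv L i := Some k, i := None]"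
      by (simp add: \<psi>'_def map_update)
    then have "hop_potential n (map plab \<psi>') < hop_potential n ?u"
      using hop_potential_hop_left[OF wf hop] by simp
    moreover have step: "jump (Psi L n) (QPsi L p q) \<psi> \<psi>'"
      unfolding \<psi>'_def using jump_hop_left[OF less.prems pos hop(1) \<psi>_hop(2,1)] .
    moreover have "\<psi>' \<in> Psi L n"
      using step by (simp add: jump_def)
    ultimately show ?thesis
      using less.hyps by (blast intro: converse_rtranclp_into_rtranclp)
  qed simp
qed

definition cyclic_offset :: "nat \<Rightarrow> nat \<Rightarrow> nat \<Rightarrow> nat" where
  "cyclic_offset L a x = (x + L - Suc a) mod L + 1"

lemma cyclic_offset_bounds: "0 < L \<Longrightarrow> 0 < cyclic_offset L a x \<and> cyclic_offset L a x \<le> L"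
  by (simp add: cyclic_offset_def Suc_leI)

lemma cyclic_offset_add:
  assumes "a < L" "x < L"
  shows "(a + cyclic_offset L a x) mod L = x"
proof -
  have "(a + cyclic_offset L a x) mod L = (Suc a + (x + L - Suc a) mod L) mod L"
    by (simp add: cyclic_offset_def)
  also have "\<dots> = (Suc a + (x + L - Suc a)) mod L"
    by (rule mod_add_right_eq)
  also have "Suc a + (x + L - Suc a) = x + L"
    using assms by simp
  finally show ?thesis
    using assms by simp
qed

lemma cyclic_offset_add_mod:
  assumes "a < L" "0 < t" "t \<le> L"
  shows "cyclic_offset L a ((a + t) mod L) = t"
proof (cases "a + t < L")
  case True
  then have "(a + t) mod L + L - Suc a = (t - 1) + L"
    using assms by simp
  moreover have "((t - 1) + L) mod L = t - 1"
    using assms mod_add_self2[of "t - 1" L] by simp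
  ultimately show ?thesis
    using assms by (simp add: cyclic_offset_def)
next
  case False
  then have "(a + t) mod L = a + t - L"
    using assms by (simp add: le_mod_geq)
  then have "(a + t) mod L + L - Suc a = t - 1"
    using assms False by simp
  then show ?thesis
    using assms by (simp add: cyclic_offset_def)
qed

lemma cyclic_offset_prv:
  assumes "a < L" "x < L" "2 \<le> cyclic_offset L a x"
  shows "cyclic_offset L a (prv L x) = cyclic_offset L a x - 1"
proof -
  let ?t = "cyclic_offset L a x"
  have "?t \<le> L"
    using cyclic_offset_bounds assms by auto
  have "prv L x = ((a + ?t) mod L + (L - 1)) mod L"
    using cyclic_offset_add[OF assms(1,2)] assms(2) by (simp add: prv_def)
  also have "\<dots> = (a + ?t + (L - 1)) mod L"
    by (rule mod_add_left_eq)
  also have "a + ?t + (L - 1) = a + (?t - 1) + L"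
    using assms(2,3) by simp
  finally have "prv L x = (a + (?t - 1)) mod L"
    by simp
  then show ?thesis
    using cyclic_offset_add_mod[OF assms(1), of "?t - 1"] assms(3) \<open>?t \<le> L\<close> by simp
qed

lemma cyclic_offset_sub:
  assumes "b < L" "x < L"
  shows "(b + L - cyclic_offset L x b) mod L = x"
proof (cases "x < b")
  case True
  then have "cyclic_offset L x b = b - x"
    using assms by (simp add: cyclic_offset_def le_mod_geq)
  then show ?thesis
    using assms True by simp
next
  case False
  then have "cyclic_offset L x b = b + L - x"
    using assms by (simp add: cyclic_offset_def)
  then show ?thesis
    using assms False by simp
qed

lemma cyclic_offset_nxt:
  assumes "b < L" "x < L" "2 \<le> cyclic_offset L x b"
  shows "cyclic_offset L (nxt L x) b = cyclic_offset L x b - 1"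
proof -
  let ?s = "cyclic_offset L x b"
  have "?s \<le> L"
    using cyclic_offset_bounds assms by auto
  have "(nxt L x + (?s - 1)) mod L = (Suc x + (?s - 1)) mod L"
    unfolding nxt_def by (rule mod_add_left_eq)
  also have "Suc x + (?s - 1) = x + ?s"
    using assms(3) by simp
  also have "(x + ?s) mod L = b"
    using cyclic_offset_add[OF assms(2,1)] by simp
  finally show ?thesis
    using cyclic_offset_add_mod[of "nxt L x" L "?s - 1"] assms \<open>?s \<le> L\<close> by (simp add: nxt_def)
qed

lemma T2_Some:
  assumes len: "length w = L" and j: "j < L" and w_j: "w ! j = Pt k" and w_nxt: "w ! nxt L j = Bx k"
  obtains w' where "T2 L n p w j = Some (w', p k)"
    and "map olab w' = (map olab w)[j := None, nxt L j := Some k]"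
    and "set w' \<subseteq> {Pt k, Bx ((k + n - 1) mod n)} \<union> set w"
proof -
  define u where "u = map olab w"
  define d where "d = prev_dist L u j"
  define a where "a = (j + L - d) mod L"
  define F where "F x = (if x = nxt L j then Pt k
      else if cyclic_offset L a x = 1 then Bx ((k + n - 1) mod n)
      else if 2 \<le> cyclic_offset L a x \<and> cyclic_offset L a x \<le> d then w ! prv L x
      else w ! x)" for x
  have T2: "T2 L n p w j = Some (map F [0..<L], p k)"
    using w_j w_nxt by (simp add: T2_def F_def cyclic_offset_def Let_def u_def d_def a_def)
  have "0 < L" "u ! j = Some k"
    using j w_j len by (simp_all add: u_def)
  then have "0 < d" "d \<le> L"
    using prev_dist_occupied[of L j u] j by (simp_all add: d_def)
  have "a < L"
    using \<open>0 < L\<close> by (simp add: a_def)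
  have off_j: "cyclic_offset L a j = d"
  proof -
    have "(a + d) mod L = (j + L - d + d) mod L"
      unfolding a_def by (rule mod_add_left_eq)
    also have "\<dots> = j"
      using \<open>d \<le> L\<close> j by simp
    finally show ?thesis
      using cyclic_offset_add_mod[OF \<open>a < L\<close> \<open>0 < d\<close> \<open>d \<le> L\<close>] by simp
  qed
  have gap: "u ! x = None" if "x < L" "cyclic_offset L a x < d" for x
  proof -
    let ?t = "cyclic_offset L a x"
    have "0 < ?t"
      using cyclic_offset_bounds \<open>0 < L\<close> by blast
    have "x = (j + L - d + ?t) mod L"
      using cyclic_offset_add[OF \<open>a < L\<close> that(1)] unfolding a_def by (simp add: mod_add_left_eq)
    also have "j + L - d + ?t = j + L - (d - ?t)"
      using that(2) \<open>d \<le> L\<close> by simp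
    finally show ?thesis
      using prev_dist_gap[of "d - ?t" L u j] that(2) \<open>0 < ?t\<close> by (simp add: d_def)
  qed
  have "olab (F x) = (u[j := None, nxt L j := Some k]) ! x" if "x < L" for x
  proof -
    let ?t = "cyclic_offset L a x"
    have "0 < ?t"
      using cyclic_offset_bounds \<open>0 < L\<close> by blast
    have x_j: "x = j \<longleftrightarrow> ?t = d"
      using off_j cyclic_offset_add[OF \<open>a < L\<close> that] cyclic_offset_add[OF \<open>a < L\<close> j] by metis
    have rhs: "(u[j := None, nxt L j := Some k]) ! x = (if x = j then None else u ! x)"
      if "x \<noteq> nxt L j"
      using that \<open>x < L\<close> len by (simp add: u_def)
    consider "x = nxt L j" | "x \<noteq> nxt L j" "?t = 1" | "x \<noteq> nxt L j" "2 \<le> ?t" "?t \<le> d"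
      | "x \<noteq> nxt L j" "d < ?t"
      using \<open>0 < ?t\<close> by linarith
    then show ?thesis
    proof cases
      case 1
      then show ?thesis
        using len \<open>0 < L\<close> by (simp add: F_def u_def nxt_def)
    next
      case 2
      then have "x \<noteq> j \<Longrightarrow> u ! x = None"
        using gap[OF that] x_j \<open>0 < d\<close> by simp
      then show ?thesis
        using 2 rhs by (simp add: F_def)
    next
      case 3
      have "prv L x < L" "cyclic_offset L a (prv L x) < d"
        using 3 cyclic_offset_prv[OF \<open>a < L\<close> that] \<open>0 < L\<close> by (simp_all add: prv_def)
      then have "olab (w ! prv L x) = None"
        using gap len by (simp add: u_def)
      moreover have "x \<noteq> j \<Longrightarrow> u ! x = None"
        using gap[OF that] x_j 3 by simp
      ultimately show ?thesis
        using 3 rhs by (simp add: F_def)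
    next
      case 4
      then show ?thesis
        using x_j rhs that len \<open>0 < d\<close> by (simp add: F_def u_def)
    qed
  qed
  then have "map olab (map F [0..<L]) = u[j := None, nxt L j := Some k]"
    using len by (auto intro!: nth_equalityI simp: u_def)
  moreover have "set (map F [0..<L]) \<subseteq> {Pt k, Bx ((k + n - 1) mod n)} \<union> set w"
    using len \<open>0 < L\<close> by (auto simp: F_def prv_def)
  ultimately show thesis
    using that T2 u_def by blast
qed

lemma T4_Some:
  assumes len: "length w = L" and j: "j < L" and w_j: "w ! j = Pt k" and w_prv: "w ! prv L j = Bx k"
  obtains w' where "T4 L n q w j = Some (w', q k)"
    and "map olab w' = (map olab w)[prv L j := Some k, j := None]"
    and "set w' \<subseteq> {Pt k, Bx (Suc k mod n)} \<union> set w"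
proof -
  define u where "u = map olab w"
  define e where "e = next_dist L u j"
  define b where "b = (j + e) mod L"
  define F where "F x = (if x = prv L j then Pt k
      else if cyclic_offset L x b = 1 then Bx (Suc k mod n)
      else if 2 \<le> cyclic_offset L x b \<and> cyclic_offset L x b \<le> e then w ! nxt L x
      else w ! x)" for x
  have T4: "T4 L n q w j = Some (map F [0..<L], q k)"
    using w_j w_prv by (simp add: T4_def F_def cyclic_offset_def Let_def u_def e_def b_def)
  have "0 < L" "u ! j = Some k"
    using j w_j len by (simp_all add: u_def)
  then have "0 < e" "e \<le> L"
    using next_dist_occupied[of L j u] j by (simp_all add: e_def)
  have "b < L"
    using \<open>0 < L\<close> by (simp add: b_def)
  have off_j: "cyclic_offset L j b = e"
    using cyclic_offset_add_mod[OF j \<open>0 < e\<close> \<open>e \<le> L\<close>] by (simp add: b_def)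
  have position: "x = (b + L - cyclic_offset L x b) mod L" if "x < L" for x
    using cyclic_offset_sub[OF \<open>b < L\<close> that] by simp
  have gap: "u ! x = None" if "x < L" "cyclic_offset L x b < e" for x
  proof -
    let ?s = "cyclic_offset L x b"
    have "0 < ?s" "?s \<le> L"
      using cyclic_offset_bounds \<open>0 < L\<close> by blast+
    have "x = (b + (L - ?s)) mod L"
      using position[OF that(1)] \<open>?s \<le> L\<close> by simp
    also have "\<dots> = (j + e + (L - ?s)) mod L"
      unfolding b_def by (rule mod_add_left_eq)
    also have "j + e + (L - ?s) = j + (e - ?s) + L"
      using that(2) \<open>?s \<le> L\<close> by simp
    finally show ?thesis
      using next_dist_gap[of "e - ?s" L u j] that(2) \<open>0 < ?s\<close> by (simp add: e_def)
  qed
  have "olab (F x) = (u[prv L j := Some k, j := None]) ! x" if "x < L" for x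
  proof -
    let ?s = "cyclic_offset L x b"
    have "0 < ?s"
      using cyclic_offset_bounds \<open>0 < L\<close> by blast
    have x_j: "x = j \<longleftrightarrow> ?s = e"
      using off_j position[OF that] position[OF j] by metis
    have "prv L j \<noteq> j"
      using w_j w_prv by auto
    then have rhs: "(u[prv L j := Some k, j := None]) ! x = (if x = j then None else u ! x)"
      if "x \<noteq> prv L j"
      using that \<open>x < L\<close> len by (simp add: u_def)
    consider "x = prv L j" | "x \<noteq> prv L j" "?s = 1" | "x \<noteq> prv L j" "2 \<le> ?s" "?s \<le> e"
      | "x \<noteq> prv L j" "e < ?s"
      using \<open>0 < ?s\<close> by linarith
    then show ?thesis
    proof cases
      case 1
      then show ?thesis
        using len \<open>0 < L\<close> \<open>prv L j \<noteq> j\<close> by (simp add: F_def u_def prv_def)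
    next
      case 2
      then have "x \<noteq> j \<Longrightarrow> u ! x = None"
        using gap[OF that] x_j \<open>0 < e\<close> by simp
      then show ?thesis
        using 2 rhs by (simp add: F_def)
    next
      case 3
      have "nxt L x < L" "cyclic_offset L (nxt L x) b < e"
        using 3 cyclic_offset_nxt[OF \<open>b < L\<close> that] \<open>0 < L\<close> by (simp_all add: nxt_def)
      then have "olab (w ! nxt L x) = None"
        using gap len by (simp add: u_def)
      moreover have "x \<noteq> j \<Longrightarrow> u ! x = None"
        using gap[OF that] x_j 3 by simp
      ultimately show ?thesis
        using 3 rhs by (simp add: F_def)
    next
      case 4
      then show ?thesis
        using x_j rhs that len \<open>0 < e\<close> by (simp add: F_def u_def)
    qed
  qed
  then have "map olab (map F [0..<L]) = u[prv L j := Some k, j := None]"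
    using len by (auto intro!: nth_equalityI simp: u_def)
  moreover have "set (map F [0..<L]) \<subseteq> {Pt k, Bx (Suc k mod n)} \<union> set w"
    using len \<open>0 < L\<close> by (auto simp: F_def nxt_def)
  ultimately show thesis
    using that T4 u_def by blast
qed

lemma Omega_iff: "w \<in> Omega L n \<longleftrightarrow> wf_lab L n (map olab w) \<and> (\<forall>m. Bx m \<in> set w \<longrightarrow> m < n)"
  unfolding Omega_def by (auto simp: in_set_conv_nth)

lemma length_Omega: "w \<in> Omega L n \<Longrightarrow> length w = L"
  unfolding Omega_def wf_lab_def by simp

lemma map_plab_Proj [simp]: "map plab (Proj w) = map olab w"
proof -
  have "plab (proj_letter x) = olab x" for x
    by (cases x) simp_all
  then show ?thesis
    by (simp add: Proj_def)
qed

lemma Proj_eqI: "map olab w = map plab \<psi> \<Longrightarrow> Proj w = \<psi>"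
  using map_plab_inj by (metis map_plab_Proj)

lemma Proj_Omega: "w \<in> Omega L n \<Longrightarrow> Proj w \<in> Psi L n"
  by (simp add: Omega_iff Psi_def)

lemma finite_Omega: "finite (Omega L n)"
proof (rule finite_subset)
  show "Omega L n \<subseteq> {w. set w \<subseteq> Pt ` {..<n} \<union> Bx ` {..<n} \<and> length w = L}"
  proof
    fix w assume w: "w \<in> Omega L n"
    have "x \<in> Pt ` {..<n} \<union> Bx ` {..<n}" if x: "x \<in> set w" for x
    proof -
      obtain i where "i < L" "w ! i = x"
        using x length_Omega[OF w] by (auto simp: in_set_conv_nth)
      then show ?thesis
        using w x unfolding Omega_iff wf_lab_def by (cases x) (auto simp: length_Omega[OF w])
    qed
    then have "set w \<subseteq> Pt ` {..<n} \<union> Bx ` {..<n}"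
      by blast
    then show "w \<in> {w. set w \<subseteq> Pt ` {..<n} \<union> Bx ` {..<n} \<and> length w = L}"
      using length_Omega[OF w] by simp
  qed
  show "finite {w. set w \<subseteq> Pt ` {..<n} \<union> Bx ` {..<n} \<and> length w = L}"
    by (intro finite_lists_length_eq) simp
qed

lemma finite_Psi: "finite (Psi L n)"
proof (rule finite_subset)
  show "Psi L n \<subseteq> {\<psi>. set \<psi> \<subseteq> insert Vac (PPt ` {..<n}) \<and> length \<psi> = L}"
  proof
    fix \<psi> assume \<psi>: "\<psi> \<in> Psi L n"
    have "x \<in> insert Vac (PPt ` {..<n})" if x: "x \<in> set \<psi>" for x
    proof -
      obtain i where "i < L" "\<psi> ! i = x"
        using x length_Psi[OF \<psi>] by (auto simp: in_set_conv_nth)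
      then show ?thesis
        using label_less_Psi[OF \<psi>] by (cases x) auto
    qed
    then show "\<psi> \<in> {\<psi>. set \<psi> \<subseteq> insert Vac (PPt ` {..<n}) \<and> length \<psi> = L}"
      using length_Psi[OF \<psi>] by auto
  qed
  show "finite {\<psi>. set \<psi> \<subseteq> insert Vac (PPt ` {..<n}) \<and> length \<psi> = L}"
    by (intro finite_lists_length_eq) simp
qed

lemma omove_blocks:
  assumes "pos < L"
  shows "omove L n p q w pos = T1 L p w pos" "omove L n p q w (L + pos) = T2 L n p w pos"
    "omove L n p q w (2 * L + pos) = T3 L q w pos" "omove L n p q w (3 * L + pos) = T4 L n q w pos"
  using assms by (simp_all add: omove_def)

text \<open>At each position exactly one of the moves (T1) and (T2) realises the ASEP jump to the
  right, and (T3), (T4) the jump to the left: which one applies depends only on the label of the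
  box that is overtaken.\<close>
lemma right_moves_cases:
  assumes \<omega>: "\<omega> \<in> Omega L n" and pos: "pos < L"
  obtains "T1 L p \<omega> pos = None" "T2 L n p \<omega> pos = None" "pmove L p q (Proj \<omega>) pos = None"
  | t r where "pmove L p q (Proj \<omega>) pos = Some (Proj t, r)" "t \<in> Omega L n"
      "T1 L p \<omega> pos = Some (t, r) \<and> T2 L n p \<omega> pos = None
       \<or> T1 L p \<omega> pos = None \<and> T2 L n p \<omega> pos = Some (t, r)"
proof -
  have len: "length \<omega> = L"
    using length_Omega[OF \<omega>] .
  have "nxt L pos < L"
    using pos by (simp add: nxt_def)
  then have Proj_nth: "Proj \<omega> ! pos = proj_letter (\<omega> ! pos)" "Proj \<omega> ! nxt L pos = proj_letter (\<omega> ! nxt L pos)"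
    using pos len by (simp_all add: Proj_def)
  show thesis
  proof (cases "\<omega> ! pos")
    case (Pt k)
    show thesis
    proof (cases "\<omega> ! nxt L pos")
      case (Bx m)
      let ?hop = "(map olab \<omega>)[pos := None, nxt L pos := Some k]"
      have pmove: "pmove L p q (Proj \<omega>) pos = Some ((Proj \<omega>)[pos := Vac, nxt L pos := PPt k], p k)"
        using Pt Bx Proj_nth pos by (simp add: pmove_def)
      have "wf_lab L n ?hop"
        using \<omega> wf_lab_hop_right_iff[of "map olab \<omega>" L pos k n] Pt Bx len pos \<open>nxt L pos < L\<close>
        by (simp add: Omega_iff)
      then have target: "t \<in> Omega L n" "Proj t = (Proj \<omega>)[pos := Vac, nxt L pos := PPt k]"
        if "map olab t = ?hop" "\<forall>m'. Bx m' \<in> set t \<longrightarrow> Bx m' \<in> set \<omega> \<or> m' < n" for t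
        using that \<omega> by (auto simp: Omega_iff map_update intro!: Proj_eqI)
      show thesis
      proof (cases "m = k")
        case False
        let ?t = "\<omega>[pos := Bx m, nxt L pos := Pt k]"
        have "Bx m \<in> set \<omega>"
          using Bx \<open>nxt L pos < L\<close> len by (metis nth_mem)
        moreover have "set ?t \<subseteq> insert (Pt k) (insert (Bx m) (set \<omega>))"
          using set_update_subset_insert[of \<omega> pos "Bx m"]
            set_update_subset_insert[of "\<omega>[pos := Bx m]" "nxt L pos" "Pt k"] by blast
        ultimately have "\<forall>m'. Bx m' \<in> set ?t \<longrightarrow> Bx m' \<in> set \<omega> \<or> m' < n"
          by blast
        moreover have "T1 L p \<omega> pos = Some (?t, p k)" "T2 L n p \<omega> pos = None"
          using Pt Bx False by (simp_all add: T1_def T2_def)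
        moreover have "map olab ?t = ?hop"
          by (simp add: map_update)
        ultimately show thesis
          using that(2)[of ?t "p k"] pmove target by simp
      next
        case True
        obtain t where t: "T2 L n p \<omega> pos = Some (t, p k)" "map olab t = ?hop"
          "set t \<subseteq> {Pt k, Bx ((k + n - 1) mod n)} \<union> set \<omega>"
          using T2_Some[OF len pos Pt, of n p] Bx True by auto
        have "k < n"
          using \<omega> Pt pos len by (auto simp: Omega_iff wf_lab_def)
        then have "\<forall>m'. Bx m' \<in> set t \<longrightarrow> Bx m' \<in> set \<omega> \<or> m' < n"
          using t(3) by auto
        moreover have "T1 L p \<omega> pos = None"
          using Pt Bx True by (simp add: T1_def)
        ultimately show thesis
          using that(2)[of t "p k"] pmove target t by simp
      qed
    next
      case (Pt k')
      then show thesis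
        using that(1) \<open>\<omega> ! pos = Pt k\<close> Proj_nth pos by (simp add: T1_def T2_def pmove_def)
    qed
  next
    case (Bx m)
    then show thesis
      using that(1) Proj_nth pos by (simp add: T1_def T2_def pmove_def)
  qed
qed

lemma left_moves_cases:
  assumes \<omega>: "\<omega> \<in> Omega L n" and pos: "pos < L"
  obtains "T3 L q \<omega> pos = None" "T4 L n q \<omega> pos = None" "pmove L p q (Proj \<omega>) (L + pos) = None"
  | t r where "pmove L p q (Proj \<omega>) (L + pos) = Some (Proj t, r)" "t \<in> Omega L n"
      "T3 L q \<omega> pos = Some (t, r) \<and> T4 L n q \<omega> pos = None
       \<or> T3 L q \<omega> pos = None \<and> T4 L n q \<omega> pos = Some (t, r)"
proof -
  have len: "length \<omega> = L"
    using length_Omega[OF \<omega>] .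
  have "prv L pos < L"
    using pos by (simp add: prv_def)
  then have Proj_nth: "Proj \<omega> ! pos = proj_letter (\<omega> ! pos)" "Proj \<omega> ! prv L pos = proj_letter (\<omega> ! prv L pos)"
    using pos len by (simp_all add: Proj_def)
  have div_mod: "(L + pos) div L = 1" "(L + pos) mod L = pos"
    using pos by simp_all
  show thesis
  proof (cases "\<omega> ! pos")
    case (Pt k)
    show thesis
    proof (cases "\<omega> ! prv L pos")
      case (Bx m)
      let ?hop = "(map olab \<omega>)[prv L pos := Some k, pos := None]"
      have pmove: "pmove L p q (Proj \<omega>) (L + pos) = Some ((Proj \<omega>)[prv L pos := PPt k, pos := Vac], q k)"
        using Pt Bx Proj_nth pos by (intro pmove_hop_left) simp_all
      have "wf_lab L n ?hop"
        using \<omega> wf_lab_hop_left_iff[of "map olab \<omega>" L pos k n] Pt Bx len pos \<open>prv L pos < L\<close>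
        by (simp add: Omega_iff)
      then have target: "t \<in> Omega L n" "Proj t = (Proj \<omega>)[prv L pos := PPt k, pos := Vac]"
        if "map olab t = ?hop" "\<forall>m'. Bx m' \<in> set t \<longrightarrow> Bx m' \<in> set \<omega> \<or> m' < n" for t
        using that \<omega> by (auto simp: Omega_iff map_update intro!: Proj_eqI)
      show thesis
      proof (cases "m = k")
        case False
        let ?t = "\<omega>[prv L pos := Pt k, pos := Bx m]"
        have "Bx m \<in> set \<omega>"
          using Bx \<open>prv L pos < L\<close> len by (metis nth_mem)
        moreover have "set ?t \<subseteq> insert (Bx m) (insert (Pt k) (set \<omega>))"
          using set_update_subset_insert[of \<omega> "prv L pos" "Pt k"]
            set_update_subset_insert[of "\<omega>[prv L pos := Pt k]" pos "Bx m"] by blast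
        ultimately have "\<forall>m'. Bx m' \<in> set ?t \<longrightarrow> Bx m' \<in> set \<omega> \<or> m' < n"
          by blast
        moreover have "T3 L q \<omega> pos = Some (?t, q k)" "T4 L n q \<omega> pos = None"
          using Pt Bx False by (simp_all add: T3_def T4_def)
        moreover have "map olab ?t = ?hop"
          by (simp add: map_update)
        ultimately show thesis
          using that(2)[of ?t "q k"] pmove target by simp
      next
        case True
        obtain t where t: "T4 L n q \<omega> pos = Some (t, q k)" "map olab t = ?hop"
          "set t \<subseteq> {Pt k, Bx (Suc k mod n)} \<union> set \<omega>"
          using T4_Some[OF len pos Pt, of n q] Bx True by auto
        have "k < n"
          using \<omega> Pt pos len by (auto simp: Omega_iff wf_lab_def)
        then have "\<forall>m'. Bx m' \<in> set t \<longrightarrow> Bx m' \<in> set \<omega> \<or> m' < n"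
          using t(3) by auto
        moreover have "T3 L q \<omega> pos = None"
          using Pt Bx True by (simp add: T3_def)
        ultimately show thesis
          using that(2)[of t "q k"] pmove target t by simp
      qed
    next
      case (Pt k')
      then show thesis
        using that(1) \<open>\<omega> ! pos = Pt k\<close> Proj_nth div_mod by (simp add: T3_def T4_def pmove_def)
    qed
  next
    case (Bx m)
    then show thesis
      using that(1) Proj_nth div_mod by (cases "\<omega> ! prv L pos") (simp_all add: T3_def T4_def pmove_def)
  qed
qed

lemma omove_in_Omega:
  assumes \<omega>: "\<omega> \<in> Omega L n" and "i < 4 * L" and move: "omove L n p q \<omega> i = Some (t, r)"
  shows "t \<in> Omega L n"
proof -
  define pos where "pos = i mod L"
  have "pos < L"
    using \<open>i < 4 * L\<close> by (simp add: pos_def)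
  have "i div L < 4"
    using \<open>i < 4 * L\<close> by (simp add: less_mult_imp_div_less)
  then consider "omove L n p q \<omega> i = T1 L p \<omega> pos" | "omove L n p q \<omega> i = T2 L n p \<omega> pos"
    | "omove L n p q \<omega> i = T3 L q \<omega> pos" | "omove L n p q \<omega> i = T4 L n q \<omega> pos"
    unfolding omove_def pos_def Let_def by (smt (verit) less_Suc_eq numeral_eq_Suc pred_numeral_simps)
  then show ?thesis
    using move right_moves_cases[OF \<omega> \<open>pos < L\<close>, of p q] left_moves_cases[OF \<omega> \<open>pos < L\<close>, of q p]
    by cases auto
qed

lemma sum_fibre_trate:
  assumes "finite S" and targets: "\<And>i t r. i < N \<Longrightarrow> mv s i = Some (t, r) \<Longrightarrow> t \<in> S"
  shows "(\<Sum>s'\<in>{s'\<in>S. f s' = y}. trate mv N s s')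
    = (\<Sum>i<N. case mv s i of None \<Rightarrow> 0 | Some (t, r) \<Rightarrow> if f t = y then r else 0)"
  unfolding trate_def
proof (subst sum.swap, intro sum.cong refl)
  fix i assume "i \<in> {..<N}"
  show "(\<Sum>s'\<in>{s'\<in>S. f s' = y}. case mv s i of None \<Rightarrow> 0 | Some (t, r) \<Rightarrow> if t = s' then r else 0)
      = (case mv s i of None \<Rightarrow> 0 | Some (t, r) \<Rightarrow> if f t = y then r else 0)"
  proof (cases "mv s i")
    case (Some a)
    obtain t r where "a = (t, r)"
      by fastforce
    then show ?thesis
      using Some targets[of i t r] \<open>i \<in> {..<N}\<close> \<open>finite S\<close> by simp
  qed simp
qed

lemma sum_lessThan_add: "(\<Sum>i<a + b. g i) = (\<Sum>i<a. g i) + (\<Sum>i<b. g (a + i))"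
  for a b :: nat
  by (induction b) (simp_all add: add.assoc)

lemma sum_lessThan_mult: "(\<Sum>i<k * L. g i) = (\<Sum>pos<L. \<Sum>c<k. g (c * L + pos))"
  for k L :: nat
proof (induction k)
  case (Suc k)
  have "(\<Sum>i<Suc k * L. g i) = (\<Sum>i<k * L. g i) + (\<Sum>pos<L. g (k * L + pos))"
    using sum_lessThan_add[of g "k * L" L] by (simp add: add.commute)
  then show ?case
    by (simp add: Suc.IH sum.distrib)
qed simp

theorem QOmega_lumpable:
  assumes \<omega>: "\<omega> \<in> Omega L n"
  shows "(\<Sum>\<omega>'\<in>{\<omega>'\<in>Omega L n. Proj \<omega>' = \<psi>}. QOmega L n p q \<omega> \<omega>') = QPsi L p q (Proj \<omega>) \<psi>"
proof -
  define g where
    "g i = (case omove L n p q \<omega> i of None \<Rightarrow> 0 | Some (t, r) \<Rightarrow> if Proj t = \<psi> then r else 0)" for i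
  define h where
    "h i = (case pmove L p q (Proj \<omega>) i of None \<Rightarrow> 0 | Some (t, r) \<Rightarrow> if t = \<psi> then r else 0)" for i
  have block: "(\<Sum>c<4. g (c * L + pos)) = (\<Sum>c<2. h (c * L + pos))"
    if "pos < L" for pos
  proof -
    have "g pos + g (L + pos) = h pos"
      using right_moves_cases[OF \<omega> that, of p q] unfolding g_def h_def omove_blocks[OF that]
      by cases auto
    moreover have "g (2 * L + pos) + g (3 * L + pos) = h (L + pos)"
      using left_moves_cases[OF \<omega> that, of q p] unfolding g_def h_def omove_blocks[OF that]
      by cases auto
    ultimately show ?thesis
      by (simp add: numeral_eq_Suc add.commute)
  qed
  have "(\<Sum>\<omega>'\<in>{\<omega>'\<in>Omega L n. Proj \<omega>' = \<psi>}. QOmega L n p q \<omega> \<omega>') = (\<Sum>i<4 * L. g i)"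
    unfolding QOmega_def g_def by (rule sum_fibre_trate[OF finite_Omega]) (use omove_in_Omega[OF \<omega>] in blast)
  also have "\<dots> = (\<Sum>pos<L. \<Sum>c<2. h (c * L + pos))"
    using block by (simp add: sum_lessThan_mult)
  also have "\<dots> = (\<Sum>i<2 * L. h i)"
    by (simp add: sum_lessThan_mult)
  also have "\<dots> = QPsi L p q (Proj \<omega>) \<psi>"
    unfolding QPsi_def trate_def h_def ..
  finally show ?thesis .
qed

theorem corollary3p3:
  fixes L n :: nat and p q :: "nat \<Rightarrow> real"
    and \<pi> :: "pletter list \<Rightarrow> real" and \<pi>h :: "oletter list \<Rightarrow> real"
  assumes "1 \<le> n" and "n < L"
    and "\<forall>k<n. 0 < p k \<and> 0 < q k"
    and "stationary (Psi L n) (QPsi L p q) \<pi>"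
    and "stationary (Omega L n) (QOmega L n p q) \<pi>h"
  shows "\<forall>\<psi>\<in>Psi L n. \<pi> \<psi> = (\<Sum>\<omega>\<in>{\<omega>\<in>Omega L n. Proj \<omega> = \<psi>}. \<pi>h \<omega>)"
proof
  fix \<psi> assume "\<psi> \<in> Psi L n"
  have "stationary (Psi L n) (QPsi L p q) (\<lambda>\<psi>. \<Sum>\<omega>\<in>{\<omega>\<in>Omega L n. Proj \<omega> = \<psi>}. \<pi>h \<omega>)"
    using finite_Omega finite_Psi _ _ assms(5)
    by (rule stationary_pushforward) (auto simp: QOmega_lumpable Proj_Omega)
  moreover have "\<forall>\<psi>\<in>Psi L n. \<forall>\<psi>'\<in>Psi L n. 0 \<le> QPsi L p q \<psi> \<psi>'"
    using QPsi_nonneg assms(3) by blast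
  moreover have "\<forall>\<psi>\<in>Psi L n. (jump (Psi L n) (QPsi L p q))\<^sup>*\<^sup>* \<psi> (Psi_canonical L n)"
    using Psi_reaches_canonical assms(2,3) by blast
  ultimately show "\<pi> \<psi> = (\<Sum>\<omega>\<in>{\<omega>\<in>Omega L n. Proj \<omega> = \<psi>}. \<pi>h \<omega>)"
    using stationary_unique[OF finite_Psi] assms(4) \<open>\<psi> \<in> Psi L n\<close> by blast
qed

end
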